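(* Let $\Sigma$ be an alphabet with at least two letters, $k\ge1$, and $f\colon(\Sigma^* )^k\to\Sigma^*$ RCP. If there are $u_1,\ldots,u_k\in\Sigma^*$, all different from $\varepsilon$, with $f(u_1,\ldots,u_k)=\varepsilon$, then $f(x_1,\ldots,x_k)=\varepsilon$ for all $x_1,\ldots,x_k\in\Sigma^*$.
   Context: $\Sigma^*$ is the free monoid over $\Sigma$ (finite words, concatenation, empty word $\varepsilon$). A function $f\colon(\Sigma^* )^k\to\Sigma^*$ is RCP if for every monoid morphism $\varphi\colon\Sigma^*\to\Sigma^*$ and all $u_1,\ldots,u_k,v_1,\ldots,v_k$ with $\varphi(u_i)=\varphi(v_i)$ for all $i$, we have $\varphi(f(u_1,\ldots,u_k))=\varphi(f(v_1,\ldots,v_k))$. *)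

theory Defs
  imports Main
begin

definition monoid_morphism :: "('a list \<Rightarrow> 'a list) \<Rightarrow> bool" where
  "monoid_morphism \<phi> \<longleftrightarrow> \<phi> [] = [] \<and> (\<forall>u v. \<phi> (u @ v) = \<phi> u @ \<phi> v)"

text \<open>A k-ary function on words is represented as a function on lists of words;
  only its values on argument lists of length k matter.\<close>
definition RCP :: "nat \<Rightarrow> ('a list list \<Rightarrow> 'a list) \<Rightarrow> bool" where
  "RCP k f \<longleftrightarrow> (\<forall>\<phi> us vs. monoid_morphism \<phi> \<longrightarrow> length us = k \<longrightarrow> length vs = k \<longrightarrow>
      (\<forall>i<k. \<phi> (us ! i) = \<phi> (vs ! i)) \<longrightarrow> \<phi> (f us) = \<phi> (f vs))"

end

theory Submission
  imports Defs
begin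

text \<open>Collapsing every letter to a single one shows that the length of \<open>f xs\<close> depends only on
  the lengths of the arguments. If \<open>f\<close> vanishes on a tuple of nonempty words, the morphism
  \<open>b \<mapsto> aa, x \<mapsto> a\<close> sends \<open>(b a\<^sup>n\<^sup>-\<^sup>1)\<close> and \<open>(a\<^sup>n)\<close> to \<open>(a\<^sup>n\<^sup>+\<^sup>1)\<close>; it erases no letter, so
  \<open>f\<close> also vanishes on all tuples whose lengths are uniformly longer. Finally, any tuple can be
  padded with a letter \<open>d\<close> to such a length, and erasing \<open>d\<close> shows that \<open>f xs\<close> uses no letter
  other than \<open>d\<close>. With two distinct letters, \<open>f xs\<close> is empty.\<close>

lemma RCPD:
  assumes "RCP k f" "monoid_morphism \<phi>" "length us = k" "length vs = k"
    "\<And>i. i < k \<Longrightarrow> \<phi> (us ! i) = \<phi> (vs ! i)"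
  shows "\<phi> (f us) = \<phi> (f vs)"
  using assms unfolding RCP_def by blast

lemma monoid_morphism_concat_map: "monoid_morphism (\<lambda>w. concat (map h w))"
  unfolding monoid_morphism_def by simp

lemma monoid_morphism_map: "monoid_morphism (map g)"
  unfolding monoid_morphism_def by simp

lemma monoid_morphism_filter: "monoid_morphism (filter P)"
  unfolding monoid_morphism_def by simp

lemma RCP_length_eq:
  fixes f :: "'a list list \<Rightarrow> 'a list"
  assumes "RCP k f" "length us = k" "length vs = k"
    "\<And>i. i < k \<Longrightarrow> length (us ! i) = length (vs ! i)"
  shows "length (f us) = length (f vs)"
proof -
  have "map (\<lambda>_. undefined :: 'a) (f us) = map (\<lambda>_. undefined) (f vs)"
    by (rule RCPD[OF assms(1) monoid_morphism_map assms(2,3)])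
      (simp add: assms(4) map_replicate_const)
  then show ?thesis
    by (metis length_map)
qed

corollary RCP_Nil_if_same_lengths:
  assumes "RCP k f" "length us = k" "length vs = k"
    "\<And>i. i < k \<Longrightarrow> length (vs ! i) = length (us ! i)" "f us = []"
  shows "f vs = []"
  using RCP_length_eq[OF assms(1-3)] assms(4,5) by simp

lemma RCP_Nil_lengthen:
  fixes f :: "'a list list \<Rightarrow> 'a list" and a b :: 'a
  assumes "RCP k f" "a \<noteq> b" "length us = k" "\<forall>i<k. us ! i \<noteq> []" "f us = []"
    and "length vs = k" "\<And>i. i < k \<Longrightarrow> length (vs ! i) = Suc (length (us ! i))"
  shows "f vs = []"
proof -
  define h where "h x = (if x = b then [a, a] else [a])" for x
  define zs where "zs = map (\<lambda>u. b # replicate (length u - 1) a) us"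
  define ws where "ws = map (\<lambda>u. replicate (Suc (length u)) a) us"
  have h_a: "concat (map h (replicate n a)) = replicate n a" for n
    using \<open>a \<noteq> b\<close> by (induction n) (auto simp: h_def)
  have "f zs = []"
    by (rule RCP_Nil_if_same_lengths[OF assms(1,3) _ _ assms(5)])
      (use assms(3,4) in \<open>auto simp: zs_def\<close>)
  have "concat (map h (f ws)) = concat (map h (f zs))"
  proof (rule RCPD[OF assms(1) monoid_morphism_concat_map])
    fix i assume "i < k"
    then obtain m where "length (us ! i) = Suc m"
      using assms(4) by (cases "us ! i") auto
    with \<open>i < k\<close> assms(3) show "concat (map h (ws ! i)) = concat (map h (zs ! i))"
      by (simp add: ws_def zs_def h_a del: replicate_Suc) (simp add: h_def h_a \<open>a \<noteq> b\<close>)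
  qed (simp_all add: ws_def zs_def assms(3))
  moreover have "h x \<noteq> []" for x
    by (simp add: h_def)
  ultimately have "f ws = []"
    using \<open>f zs = []\<close> by (cases "f ws") auto
  then show ?thesis
    using RCP_Nil_if_same_lengths[OF assms(1) _ assms(6), of ws] by (simp add: ws_def assms(3,7))
qed

lemma RCP_Nil_if_lengths_add:
  fixes f :: "'a list list \<Rightarrow> 'a list" and a b :: 'a
  assumes "RCP k f" "a \<noteq> b" "length us = k" "\<forall>i<k. us ! i \<noteq> []" "f us = []"
    and "length vs = k" "\<And>i. i < k \<Longrightarrow> length (vs ! i) = length (us ! i) + c"
  shows "f vs = []"
  using assms(6,7)
proof (induction c arbitrary: vs)
  case 0
  then show ?case
    using RCP_Nil_if_same_lengths[OF assms(1,3) _ _ assms(5)] by simp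
next
  case (Suc c)
  define ws where "ws = map (\<lambda>u. replicate (length u + c) a) us"
  have ws: "length ws = k" "\<And>i. i < k \<Longrightarrow> length (ws ! i) = length (us ! i) + c"
    by (simp_all add: ws_def assms(3))
  have "f ws = []"
    using Suc.IH[OF ws] .
  moreover have "\<forall>i<k. ws ! i \<noteq> []"
    using assms(3,4) by (simp add: ws_def)
  ultimately show ?case
    using RCP_Nil_lengthen[OF assms(1,2) ws(1) _ _ Suc.prems(1)] Suc.prems(2) ws(2) by simp
qed

lemma pad_to_lengths:
  assumes "length xs = k" "length us = k"
  obtains vs c where "length vs = k" "\<And>i. i < k \<Longrightarrow> length (vs ! i) = length (us ! i) + c"
    "\<And>i. i < k \<Longrightarrow> filter (\<lambda>x. x \<noteq> d) (vs ! i) = filter (\<lambda>x. x \<noteq> d) (xs ! i)"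
proof -
  define c where "c = sum_list (map length xs)"
  define vs where
    "vs = map (\<lambda>i. xs ! i @ replicate (length (us ! i) + c - length (xs ! i)) d) [0..<k]"
  have "length (xs ! i) \<le> c" if "i < k" for i
    unfolding c_def using that assms(1) by (metis elem_le_sum_list length_map nth_map)
  then have "length (vs ! i) = length (us ! i) + c" if "i < k" for i
    using that by (fastforce simp: vs_def)
  then show ?thesis
    by (intro that[of vs c]) (auto simp: vs_def)
qed

lemma RCP_set_subset_if_vanishing:
  fixes f :: "'a list list \<Rightarrow> 'a list" and a b :: 'a
  assumes "RCP k f" "a \<noteq> b" "length us = k" "\<forall>i<k. us ! i \<noteq> []" "f us = []"
    and "length xs = k"
  shows "set (f xs) \<subseteq> {d}"
proof -
  obtain vs c where vs: "length vs = k" "\<And>i. i < k \<Longrightarrow> length (vs ! i) = length (us ! i) + c"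
    "\<And>i. i < k \<Longrightarrow> filter (\<lambda>x. x \<noteq> d) (vs ! i) = filter (\<lambda>x. x \<noteq> d) (xs ! i)"
    using pad_to_lengths[where d = d, OF assms(6,3)] by metis
  have "f vs = []"
    using RCP_Nil_if_lengths_add[OF assms(1-5) vs(1,2)] .
  moreover have "filter (\<lambda>x. x \<noteq> d) (f xs) = filter (\<lambda>x. x \<noteq> d) (f vs)"
    by (rule RCPD[OF assms(1) monoid_morphism_filter assms(6) vs(1)]) (simp add: vs(3))
  ultimately show ?thesis
    by (auto simp: filter_empty_conv)
qed

lemma card_ge_2_obtains_distinct:
  assumes "card (UNIV :: 'a set) \<ge> 2"
  obtains a b :: "'a::finite" where "a \<noteq> b"
proof -
  have "\<not> card (UNIV :: 'a set) \<le> Suc 0"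
    using assms by simp
  then show ?thesis
    using that card_le_Suc0_iff_eq[OF finite_UNIV] by blast
qed

theorem mainTheorem14:
  fixes f :: "'a::finite list list \<Rightarrow> 'a list" and k :: nat
  assumes "card (UNIV :: 'a set) \<ge> 2"
    and "k \<ge> 1"
    and "RCP k f"
    and "length us = k" and "\<forall>i<k. us ! i \<noteq> []" and "f us = []"
  shows "\<forall>xs. length xs = k \<longrightarrow> f xs = []"
proof (intro allI impI)
  fix xs :: "'a list list"
  assume "length xs = k"
  obtain a b :: 'a where "a \<noteq> b"
    using card_ge_2_obtains_distinct[OF assms(1)] .
  have "set (f xs) \<subseteq> {a}" "set (f xs) \<subseteq> {b}"
    using RCP_set_subset_if_vanishing[OF assms(3) \<open>a \<noteq> b\<close> assms(4-6) \<open>length xs = k\<close>] by blast+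
  with \<open>a \<noteq> b\<close> show "f xs = []"
    by (cases "f xs") auto
qed

end
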